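(* Let $n\ge 1$, let $K:(0,\infty)\to(0,\infty)$ be a smooth function, and let $\Phi$ be an antiderivative of $\sqrt{K}$ on $(0,\infty)$ (for instance $\Phi(\varrho)=\int_0^\varrho\sqrt{K(s)}\,ds$ when this integral converges). Let $\varphi:(0,\infty)\to\mathbb{R}$ and $F:(0,\infty)\to\mathbb{R}$ be smooth functions satisfying $$\sqrt{\varrho}\,\varphi'(\varrho)=\sqrt{K(\varrho)},\qquad F'(\varrho)=\sqrt{K(\varrho)\,\varrho}\qquad(\varrho>0).$$ Then for every smooth positive function $\varrho:\Omega\to(0,\infty)$ on an open set $\Omega\subset\mathbb{R}^n$, $$\varrho\,\nabla\Bigl(\sqrt{K(\varrho)}\,\Delta\bigl(\Phi(\varrho)\bigr)\Bigr)={\rm div}\Bigl(F(\varrho)\,\nabla\nabla\varphi(\varrho)\Bigr)-\nabla\Bigl(\bigl(F(\varrho)-\varrho F'(\varrho)\bigr)\,\Delta\varphi(\varrho)\Bigr)$$ holds on $\Omega$.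
   Context: $\nabla\nabla\varphi(\varrho)$ denotes the Hessian matrix of the function $x\mapsto\varphi(\varrho(x))$, and ${\rm div}$ of a matrix field $M$ is the vector field with components $({\rm div} M)_i=\sum_j\partial_j M_{ij}$. $\Delta$ is the Laplacian. In the special case $K(\varrho)=c/\varrho$ this identity reduces to the quantum Bohm identity $2\varrho\,{\rm div}(\Delta\sqrt{\varrho}/\sqrt{\varrho})={\rm div}(\varrho\nabla\nabla\log\varrho)$ (up to the constant $c$). *)

theory Defs
  imports "HOL-Analysis.Analysis"
begin

definition pd :: "'n::finite \<Rightarrow> (real^'n \<Rightarrow> real) \<Rightarrow> real^'n \<Rightarrow> real" where
  "pd i f x = deriv (\<lambda>t. f (x + t *\<^sub>R axis i 1)) 0"

fun pds :: "'n::finite list \<Rightarrow> (real^'n \<Rightarrow> real) \<Rightarrow> real^'n \<Rightarrow> real" where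
  "pds [] f = f"
| "pds (i # is) f = pd i (pds is f)"

definition smooth_on :: "(real^'n::finite) set \<Rightarrow> (real^'n \<Rightarrow> real) \<Rightarrow> bool" where
  "smooth_on S f \<longleftrightarrow> (\<forall>is. \<forall>x\<in>S. pds is f differentiable (at x))"

definition smooth_on1 :: "real set \<Rightarrow> (real \<Rightarrow> real) \<Rightarrow> bool" where
  "smooth_on1 S f \<longleftrightarrow> (\<forall>k. \<forall>x\<in>S. (deriv ^^ k) f differentiable (at x))"

definition lap :: "(real^'n::finite \<Rightarrow> real) \<Rightarrow> real^'n \<Rightarrow> real" where
  "lap f x = (\<Sum>i\<in>UNIV. pd i (pd i f) x)"

end

theory Submission
  imports Defs
begin

(* Write psi = phi(rho). Since F'(s) = s phi'(s), the chain rule gives grad F(rho) = F'(rho) grad rho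
   = rho grad psi; with the product rule and the symmetry of third partials of psi, the right-hand
   side collapses to rho grad (F'(rho) Lap psi + |grad psi|^2/2). Differentiating sqrt s phi' = sqrt K
   yields the scalar identities F' phi' = K and F' phi'' + phi'^2/2 = K'/2, and by the chain rule
   these say exactly that sqrt K(rho) Lap Phi(rho) = F'(rho) Lap psi + |grad psi|^2/2 on Omega. *)

lemma has_derivative_along_line:
  fixes f :: "'a::real_normed_vector \<Rightarrow> real"
  assumes "(f has_derivative f') (at (z + s *\<^sub>R v))"
  shows "((\<lambda>t. f (z + t *\<^sub>R v)) has_real_derivative f' v) (at s)"
proof -
  have "((\<lambda>t. z + t *\<^sub>R v) has_derivative (\<lambda>t. t *\<^sub>R v)) (at s)"
    by (auto intro!: derivative_eq_intros)
  from has_derivative_compose[OF this assms]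
  have "((\<lambda>t. f (z + t *\<^sub>R v)) has_derivative (\<lambda>t. f' (t *\<^sub>R v))) (at s)" .
  moreover have "f' (t *\<^sub>R v) = f' v * t" for t
    using linear_scale[OF has_derivative_linear[OF assms]] by simp
  ultimately show ?thesis
    by (simp add: has_field_derivative_def)
qed

lemma pd_eq_has_derivative:
  fixes f :: "real^'n::finite \<Rightarrow> real"
  assumes "(f has_derivative f') (at y)"
  shows "pd i f y = f' (axis i 1)"
  using has_derivative_along_line[of f f' y 0] assms unfolding pd_def
  by (simp add: DERIV_imp_deriv)

lemma has_real_derivative_pd:
  fixes f :: "real^'n::finite \<Rightarrow> real"
  assumes "f differentiable (at (z + s *\<^sub>R axis i 1))"
  shows "((\<lambda>t. f (z + t *\<^sub>R axis i 1)) has_real_derivative pd i f (z + s *\<^sub>R axis i 1)) (at s)"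
proof -
  obtain f' where "(f has_derivative f') (at (z + s *\<^sub>R axis i 1))"
    using assms differentiable_def by blast
  with has_derivative_along_line pd_eq_has_derivative show ?thesis by metis
qed

lemma has_real_derivative_pd_0:
  fixes f :: "real^'n::finite \<Rightarrow> real"
  assumes "f differentiable (at y)"
  shows "((\<lambda>t. f (y + t *\<^sub>R axis i 1)) has_real_derivative pd i f y) (at 0)"
  using has_real_derivative_pd[of f y 0 i] assms by simp

lemma pd_eqI:
  "((\<lambda>t. f (y + t *\<^sub>R axis i 1)) has_real_derivative D) (at 0) \<Longrightarrow> pd i f y = D"
  unfolding pd_def by (rule DERIV_imp_deriv)

lemma pd_const: "pd i (\<lambda>_. a) y = 0"
  by (rule pd_eqI) simp

lemma pd_add:
  assumes "f differentiable (at y)" "g differentiable (at y)"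
  shows "pd i (\<lambda>z. f z + g z) y = pd i f y + pd i g y"
  by (intro pd_eqI DERIV_add has_real_derivative_pd_0 assms)

lemma pd_diff:
  assumes "f differentiable (at y)" "g differentiable (at y)"
  shows "pd i (\<lambda>z. f z - g z) y = pd i f y - pd i g y"
  by (intro pd_eqI DERIV_diff has_real_derivative_pd_0 assms)

lemma pd_mult:
  assumes "f differentiable (at y)" "g differentiable (at y)"
  shows "pd i (\<lambda>z. f z * g z) y = pd i f y * g y + f y * pd i g y"
  using DERIV_mult[OF has_real_derivative_pd_0[OF assms(1)] has_real_derivative_pd_0[OF assms(2)]]
  by (intro pd_eqI) (simp add: mult.commute)

lemma pd_cmult:
  assumes "f differentiable (at y)"
  shows "pd i (\<lambda>z. a * f z) y = a * pd i f y"
  by (intro pd_eqI DERIV_cmult has_real_derivative_pd_0 assms)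

lemma pd_sum:
  assumes "\<And>j. j \<in> A \<Longrightarrow> f j differentiable (at y)"
  shows "pd i (\<lambda>z. \<Sum>j\<in>A. f j z) y = (\<Sum>j\<in>A. pd i (f j) y)"
  by (intro pd_eqI DERIV_sum has_real_derivative_pd_0 assms)

lemma pd_chain:
  assumes "(h has_real_derivative h') (at (f y))" "f differentiable (at y)"
  shows "pd i (\<lambda>z. h (f z)) y = h' * pd i f y"
proof -
  have "(h has_real_derivative h') (at (f (y + 0 *\<^sub>R axis i 1)))"
    using assms(1) by simp
  from DERIV_chain2[OF this has_real_derivative_pd_0[OF assms(2)]] show ?thesis
    by (rule pd_eqI)
qed

lemma differentiable_compose_real:
  fixes f :: "'a::real_normed_vector \<Rightarrow> real"
  assumes "(h has_real_derivative h') (at (f y))" "f differentiable (at y)"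
  shows "(\<lambda>z. h (f z)) differentiable (at y)"
  using differentiable_chain_at[OF assms(2) has_field_derivative_imp_has_derivative[OF assms(1), THEN differentiableI]]
  by (simp add: o_def)

lemma pd_cong:
  assumes "open S" "y \<in> S" "\<And>z. z \<in> S \<Longrightarrow> f z = g z"
  shows "pd i f y = pd i g y"
proof -
  let ?line = "\<lambda>t::real. y + t *\<^sub>R axis i 1"
  have "open (?line -` S)"
    by (intro open_vimage assms(1) continuous_intros)
  then have "\<forall>\<^sub>F t in nhds 0. f (?line t) = g (?line t)"
    unfolding eventually_nhds using assms by (intro exI[of _ "?line -` S"]) auto
  then show ?thesis
    unfolding pd_def by (rule deriv_cong_ev) simp
qed

lemma pds_cong:
  assumes "open S" "y \<in> S" "\<And>z. z \<in> S \<Longrightarrow> f z = g z"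
  shows "pds is f y = pds is g y"
  using assms(2)
proof (induction "is" arbitrary: y)
  case (Cons i "is")
  then show ?case by (auto intro: pd_cong[OF assms(1)])
qed (use assms(3) in simp)

definition differentiable_upto_on ::
    "nat \<Rightarrow> (real^'n::finite) set \<Rightarrow> (real^'n \<Rightarrow> real) \<Rightarrow> bool" where
  "differentiable_upto_on k S f \<longleftrightarrow>
    (\<forall>is. length is \<le> k \<longrightarrow> (\<forall>x\<in>S. pds is f differentiable (at x)))"

lemma pds_append: "pds (is @ js) f = pds is (pds js f)"
  by (induction "is") auto

lemma smooth_on_iff_differentiable_upto_on: "smooth_on S f \<longleftrightarrow> (\<forall>k. differentiable_upto_on k S f)"
  unfolding smooth_on_def differentiable_upto_on_def by blast

lemma differentiable_upto_on_mono:
  "differentiable_upto_on l S f \<Longrightarrow> k \<le> l \<Longrightarrow> differentiable_upto_on k S f"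
  unfolding differentiable_upto_on_def by auto

lemma differentiable_upto_on_0:
  "differentiable_upto_on 0 S f \<longleftrightarrow> (\<forall>x\<in>S. f differentiable (at x))"
  unfolding differentiable_upto_on_def by auto

lemma differentiable_upto_on_Suc:
  "differentiable_upto_on (Suc k) S f \<longleftrightarrow>
    (\<forall>x\<in>S. f differentiable (at x)) \<and> (\<forall>i. differentiable_upto_on k S (pd i f))"
proof
  assume f: "differentiable_upto_on (Suc k) S f"
  have "pds is (pd i f) = pds (is @ [i]) f" for "is" i
    by (simp add: pds_append)
  with f show "(\<forall>x\<in>S. f differentiable (at x)) \<and> (\<forall>i. differentiable_upto_on k S (pd i f))"
    unfolding differentiable_upto_on_def by (metis Suc_le_mono le0 length_append_singleton list.size(3) pds.simps(1))
next
  assume f: "(\<forall>x\<in>S. f differentiable (at x)) \<and> (\<forall>i. differentiable_upto_on k S (pd i f))"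
  show "differentiable_upto_on (Suc k) S f"
    unfolding differentiable_upto_on_def
  proof (intro allI impI)
    fix "is" :: "'a list" assume "length is \<le> Suc k"
    then show "\<forall>x\<in>S. pds is f differentiable (at x)"
      using f by (cases "is" rule: rev_exhaust) (auto simp: pds_append differentiable_upto_on_def)
  qed
qed

lemma differentiable_upto_on_imp_differentiable:
  "differentiable_upto_on k S f \<Longrightarrow> x \<in> S \<Longrightarrow> f differentiable (at x)"
  using differentiable_upto_on_mono[of k S f 0] by (simp add: differentiable_upto_on_0)

lemma differentiable_upto_on_cong:
  assumes "open S" "\<And>z. z \<in> S \<Longrightarrow> f z = g z" "differentiable_upto_on k S f"
  shows "differentiable_upto_on k S g"
  unfolding differentiable_upto_on_def
proof (intro allI impI ballI)
  fix "is" :: "'a list" and x assume "length is \<le> k" "x \<in> S"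
  then have "pds is f differentiable (at x)"
    using assms(3) unfolding differentiable_upto_on_def by blast
  moreover have "pds is f z = pds is g z" if "z \<in> S" for z
    using pds_cong[OF assms(1) that assms(2)] .
  ultimately show "pds is g differentiable (at x)"
    using has_derivative_transform_within_open[OF _ assms(1) \<open>x \<in> S\<close>]
    unfolding differentiable_def by metis
qed

lemma differentiable_upto_on_const:
  fixes S :: "(real^'n::finite) set"
  shows "differentiable_upto_on k S (\<lambda>_. a)"
proof (induction k arbitrary: a)
  case (Suc k a)
  have "pd i (\<lambda>_. a) = (\<lambda>_. 0)" for i :: 'n
    by (simp add: pd_const fun_eq_iff)
  then show ?case
    unfolding differentiable_upto_on_Suc using Suc.IH[of 0] by simp
qed (simp add: differentiable_upto_on_0)

lemma differentiable_upto_on_add: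
  assumes "open S" "differentiable_upto_on k S f" "differentiable_upto_on k S g"
  shows "differentiable_upto_on k S (\<lambda>z. f z + g z)"
  using assms(2,3)
proof (induction k arbitrary: f g)
  case 0
  then show ?case by (simp add: differentiable_upto_on_0 differentiable_add)
next
  case (Suc k)
  have "differentiable_upto_on k S (pd i (\<lambda>z. f z + g z))" for i
  proof (rule differentiable_upto_on_cong[OF assms(1)])
    show "pd i f z + pd i g z = pd i (\<lambda>z. f z + g z) z" if "z \<in> S" for z
      using Suc.prems that by (simp add: differentiable_upto_on_Suc pd_add)
    show "differentiable_upto_on k S (\<lambda>z. pd i f z + pd i g z)"
      using Suc by (simp add: differentiable_upto_on_Suc)
  qed
  with Suc.prems show ?case by (simp add: differentiable_upto_on_Suc differentiable_add)
qed

lemma differentiable_upto_on_mult: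
  assumes "open S" "differentiable_upto_on k S f" "differentiable_upto_on k S g"
  shows "differentiable_upto_on k S (\<lambda>z. f z * g z)"
  using assms(2,3)
proof (induction k arbitrary: f g)
  case 0
  then show ?case by (simp add: differentiable_upto_on_0 differentiable_mult)
next
  case (Suc k)
  have "differentiable_upto_on k S (pd i (\<lambda>z. f z * g z))" for i
  proof (rule differentiable_upto_on_cong[OF assms(1)])
    show "pd i f z * g z + f z * pd i g z = pd i (\<lambda>z. f z * g z) z" if "z \<in> S" for z
      using Suc.prems that by (simp add: differentiable_upto_on_Suc pd_mult)
    have "differentiable_upto_on k S f" "differentiable_upto_on k S g"
      using Suc.prems differentiable_upto_on_mono le_SucI by blast+
    then show "differentiable_upto_on k S (\<lambda>z. pd i f z * g z + f z * pd i g z)"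
      using Suc by (intro differentiable_upto_on_add assms(1)) (simp_all add: differentiable_upto_on_Suc)
  qed
  with Suc.prems show ?case by (simp add: differentiable_upto_on_Suc differentiable_mult)
qed

lemma smooth_on1_deriv: "smooth_on1 T h \<Longrightarrow> smooth_on1 T (deriv h)"
  unfolding smooth_on1_def by (metis funpow_Suc_right o_apply)

lemma smooth_on1_has_real_derivative:
  "smooth_on1 T h \<Longrightarrow> s \<in> T \<Longrightarrow> (h has_real_derivative deriv h s) (at s)"
  unfolding smooth_on1_def by (metis DERIV_deriv_iff_real_differentiable funpow_0)

lemma differentiable_upto_on_compose:
  assumes "open S" "smooth_on1 T h" "\<And>z. z \<in> S \<Longrightarrow> \<rho> z \<in> T"
    and "differentiable_upto_on k S \<rho>"
  shows "differentiable_upto_on k S (\<lambda>z. h (\<rho> z))"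
  using assms(2,4)
proof (induction k arbitrary: h)
  case 0
  then show ?case
    by (auto simp: differentiable_upto_on_0 intro: differentiable_compose_real smooth_on1_has_real_derivative assms(3))
next
  case (Suc k)
  have "differentiable_upto_on k S (pd i (\<lambda>z. h (\<rho> z)))" for i
  proof (rule differentiable_upto_on_cong[OF assms(1)])
    show "deriv h (\<rho> z) * pd i \<rho> z = pd i (\<lambda>z. h (\<rho> z)) z" if "z \<in> S" for z
      using Suc.prems that
      by (intro pd_chain[symmetric] smooth_on1_has_real_derivative assms(3))
        (auto simp: differentiable_upto_on_Suc intro: assms(3))
    show "differentiable_upto_on k S (\<lambda>z. deriv h (\<rho> z) * pd i \<rho> z)"
      using Suc differentiable_upto_on_mono[OF Suc.prems(2)]
      by (intro differentiable_upto_on_mult assms(1)) (auto simp: differentiable_upto_on_Suc smooth_on1_deriv)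
  qed
  with Suc.prems show ?case
    by (auto simp: differentiable_upto_on_Suc
        intro: differentiable_compose_real smooth_on1_has_real_derivative assms(3))
qed

lemma smooth_on_imp_differentiable: "smooth_on S f \<Longrightarrow> x \<in> S \<Longrightarrow> f differentiable (at x)"
  by (metis smooth_on_iff_differentiable_upto_on differentiable_upto_on_imp_differentiable)

lemma smooth_on_pd: "smooth_on S f \<Longrightarrow> smooth_on S (pd i f)"
  by (metis smooth_on_iff_differentiable_upto_on differentiable_upto_on_Suc)

lemma smooth_on_add:
  "open S \<Longrightarrow> smooth_on S f \<Longrightarrow> smooth_on S g \<Longrightarrow> smooth_on S (\<lambda>z. f z + g z)"
  by (simp add: smooth_on_iff_differentiable_upto_on differentiable_upto_on_add)

lemma smooth_on_const:
  fixes S :: "(real^'n::finite) set"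
  shows "smooth_on S (\<lambda>_. a)"
  by (simp add: smooth_on_iff_differentiable_upto_on differentiable_upto_on_const)

lemma smooth_on_sum:
  assumes "open S" "finite A" "\<And>j. j \<in> A \<Longrightarrow> smooth_on S (f j)"
  shows "smooth_on S (\<lambda>z. \<Sum>j\<in>A. f j z)"
  using assms(2,3)
  by (induction A rule: finite_induct) (simp_all add: smooth_on_const smooth_on_add assms(1))

lemma smooth_on_compose:
  "open S \<Longrightarrow> smooth_on1 T h \<Longrightarrow> (\<And>z. z \<in> S \<Longrightarrow> \<rho> z \<in> T) \<Longrightarrow> smooth_on S \<rho>
    \<Longrightarrow> smooth_on S (\<lambda>z. h (\<rho> z))"
  by (simp add: smooth_on_iff_differentiable_upto_on differentiable_upto_on_compose)

lemma smooth_on_lap: "open S \<Longrightarrow> smooth_on S f \<Longrightarrow> smooth_on S (lap f)"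
  unfolding lap_def by (intro smooth_on_sum smooth_on_pd) auto

lemma second_difference_mean_value:
  fixes f :: "real^'n::finite \<Rightarrow> real"
  assumes f: "\<forall>y\<in>ball x \<delta>. f differentiable (at y)"
    and fi: "\<forall>y\<in>ball x \<delta>. pd i f differentiable (at y)"
    and t: "0 < t" "2 * t < \<delta>"
  shows "\<exists>p\<in>ball x \<delta>. f (x + t *\<^sub>R axis j 1 + t *\<^sub>R axis i 1) - f (x + t *\<^sub>R axis i 1)
           - f (x + t *\<^sub>R axis j 1) + f x = t\<^sup>2 * pd j (pd i f) p"
proof -
  define ei :: "real^'n" where "ei = axis i 1"
  define ej :: "real^'n" where "ej = axis j 1"
  have in_ball: "x + a *\<^sub>R axis k 1 + b *\<^sub>R axis l 1 \<in> ball x \<delta>"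
    if "0 \<le> a" "a \<le> t" "0 \<le> b" "b \<le> t" for a b k l
  proof -
    have "norm (a *\<^sub>R axis k (1::real) + b *\<^sub>R axis l 1) \<le> a + b"
      using norm_triangle_ineq[of "a *\<^sub>R axis k (1::real)" "b *\<^sub>R axis l 1"] that by simp
    moreover have "dist x (x + a *\<^sub>R axis k 1 + b *\<^sub>R axis l 1)
        = norm (a *\<^sub>R axis k (1::real) + b *\<^sub>R axis l 1)"
      by (simp add: dist_norm norm_minus_commute add.commute)
    ultimately show ?thesis
      using that t by simp
  qed
  define u where "u r = f (x + t *\<^sub>R ej + r *\<^sub>R ei) - f (x + r *\<^sub>R ei)" for r
  have "(u has_real_derivative pd i f (x + t *\<^sub>R ej + r *\<^sub>R ei) - pd i f (x + r *\<^sub>R ei)) (at r)"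
    if "0 \<le> r" "r \<le> t" for r
    unfolding u_def ei_def
    using f in_ball[of t r j i] in_ball[of r 0 i j] that t
    by (intro DERIV_diff has_real_derivative_pd) (auto simp: ej_def)
  then obtain \<sigma> where \<sigma>: "0 < \<sigma>" "\<sigma> < t"
    and u: "u t - u 0 = t * (pd i f (x + t *\<^sub>R ej + \<sigma> *\<^sub>R ei) - pd i f (x + \<sigma> *\<^sub>R ei))"
    using MVT2[of 0 t u "\<lambda>r. pd i f (x + t *\<^sub>R ej + r *\<^sub>R ei) - pd i f (x + r *\<^sub>R ei)"] t
    by auto
  define v where "v r = pd i f (x + \<sigma> *\<^sub>R ei + r *\<^sub>R ej)" for r
  have "(v has_real_derivative pd j (pd i f) (x + \<sigma> *\<^sub>R ei + r *\<^sub>R ej)) (at r)"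
    if "0 \<le> r" "r \<le> t" for r
    unfolding v_def ej_def
    using fi in_ball[of \<sigma> r i j] that \<sigma>
    by (intro has_real_derivative_pd) (auto simp: ei_def)
  then obtain \<tau> where \<tau>: "0 < \<tau>" "\<tau> < t"
    and v: "v t - v 0 = t * pd j (pd i f) (x + \<sigma> *\<^sub>R ei + \<tau> *\<^sub>R ej)"
    using MVT2[of 0 t v "\<lambda>r. pd j (pd i f) (x + \<sigma> *\<^sub>R ei + r *\<^sub>R ej)"] t by auto
  have "v t - v 0 = pd i f (x + t *\<^sub>R ej + \<sigma> *\<^sub>R ei) - pd i f (x + \<sigma> *\<^sub>R ei)"
    unfolding v_def by (simp add: algebra_simps)
  with u v have "u t - u 0 = t\<^sup>2 * pd j (pd i f) (x + \<sigma> *\<^sub>R ei + \<tau> *\<^sub>R ej)"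
    by (simp add: power2_eq_square)
  moreover have "x + \<sigma> *\<^sub>R ei + \<tau> *\<^sub>R ej \<in> ball x \<delta>"
    using in_ball[of \<sigma> \<tau> i j] \<sigma> \<tau> unfolding ei_def ej_def by simp
  ultimately show ?thesis
    unfolding u_def ei_def ej_def by (auto simp: algebra_simps)
qed

(* Schwarz: both mixed partials are limits of the same second difference quotient. *)
theorem pd_pd_commute:
  fixes f :: "real^'n::finite \<Rightarrow> real"
  assumes S: "open S" "x \<in> S"
    and f: "\<forall>y\<in>S. f differentiable (at y)"
    and fi: "\<forall>y\<in>S. pd i f differentiable (at y)"
    and fj: "\<forall>y\<in>S. pd j f differentiable (at y)"
    and cont_ij: "continuous (at x) (pd j (pd i f))"
    and cont_ji: "continuous (at x) (pd i (pd j f))"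
  shows "pd j (pd i f) x = pd i (pd j f) x"
proof (rule ccontr)
  define A where "A = pd j (pd i f) x"
  define B where "B = pd i (pd j f) x"
  define e where "e = \<bar>A - B\<bar> / 2"
  assume "pd j (pd i f) x \<noteq> pd i (pd j f) x"
  then have "e > 0"
    unfolding e_def A_def B_def by simp
  then obtain d1 d2 where d1: "d1 > 0" "\<forall>y. dist y x < d1 \<longrightarrow> dist (pd j (pd i f) y) A < e"
    and d2: "d2 > 0" "\<forall>y. dist y x < d2 \<longrightarrow> dist (pd i (pd j f) y) B < e"
    using cont_ij cont_ji unfolding continuous_at_eps_delta A_def B_def by metis
  obtain d0 where d0: "d0 > 0" "ball x d0 \<subseteq> S"
    using S openE by blast
  define d where "d = min d0 (min d1 d2)"
  define t where "t = d / 3"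
  have t: "0 < t" "2 * t < d" and "ball x d \<subseteq> S"
    using d0 d1 d2 unfolding t_def d_def by auto
  then obtain p q where "p \<in> ball x d" "q \<in> ball x d"
    and "f (x + t *\<^sub>R axis j 1 + t *\<^sub>R axis i 1) - f (x + t *\<^sub>R axis i 1)
           - f (x + t *\<^sub>R axis j 1) + f x = t\<^sup>2 * pd j (pd i f) p"
    and "f (x + t *\<^sub>R axis i 1 + t *\<^sub>R axis j 1) - f (x + t *\<^sub>R axis j 1)
           - f (x + t *\<^sub>R axis i 1) + f x = t\<^sup>2 * pd i (pd j f) q"
    using second_difference_mean_value[of x d f i t j] second_difference_mean_value[of x d f j t i]
      f fi fj by blast
  moreover from this have "pd j (pd i f) p = pd i (pd j f) q"
    using t by (simp add: algebra_simps)
  ultimately have "\<bar>A - B\<bar> < 2 * e"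
    using d1 d2 unfolding d_def by (fastforce simp: dist_real_def dist_commute)
  then show False
    unfolding e_def by simp
qed

lemma smooth_on_pd_pd_commute:
  "open S \<Longrightarrow> x \<in> S \<Longrightarrow> smooth_on S f \<Longrightarrow> pd j (pd i f) x = pd i (pd j f) x"
  by (intro pd_pd_commute differentiable_imp_continuous_within ballI)
    (auto intro: smooth_on_imp_differentiable smooth_on_pd)

lemma lap_compose:
  fixes \<rho> :: "real^'n::finite \<Rightarrow> real"
  assumes S: "open S" "y \<in> S" and \<rho>: "smooth_on S \<rho>" "\<And>z. z \<in> S \<Longrightarrow> \<rho> z \<in> T"
    and h: "\<And>s. s \<in> T \<Longrightarrow> (h has_real_derivative h' s) (at s)"
    and h': "(h' has_real_derivative h'') (at (\<rho> y))"
  shows "lap (\<lambda>z. h (\<rho> z)) y = h'' * (\<Sum>j\<in>UNIV. (pd j \<rho> y)\<^sup>2) + h' (\<rho> y) * lap \<rho> y"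
proof -
  have "pd j (pd j (\<lambda>z. h (\<rho> z))) y = h'' * (pd j \<rho> y)\<^sup>2 + h' (\<rho> y) * pd j (pd j \<rho>) y" for j
  proof -
    have "pd j (pd j (\<lambda>z. h (\<rho> z))) y = pd j (\<lambda>z. h' (\<rho> z) * pd j \<rho> z) y"
      using S \<rho> by (intro pd_cong pd_chain h) (auto intro: smooth_on_imp_differentiable)
    also have "\<dots> = h'' * pd j \<rho> y * pd j \<rho> y + h' (\<rho> y) * pd j (pd j \<rho>) y"
    proof -
      have "\<rho> differentiable (at y)" "pd j \<rho> differentiable (at y)"
        using S \<rho> by (auto intro: smooth_on_imp_differentiable smooth_on_pd)
      then show ?thesis
        using h' by (simp add: pd_mult pd_chain differentiable_compose_real)
    qed
    finally show ?thesis
      by (simp add: power2_eq_square)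
  qed
  then show ?thesis
    by (simp add: lap_def sum.distrib sum_distrib_left)
qed

(* Besides the product rule, the only input is the symmetry of the third partials of psi,
   which turns the sum over j of pd j (pd i (pd j psi)) into pd i (lap psi). *)
lemma sum_pd_mult_pd_pd_eq:
  fixes \<rho> \<psi> f c :: "real^'n::finite \<Rightarrow> real"
  assumes S: "open S" "x \<in> S" and \<psi>: "smooth_on S \<psi>"
    and diff: "\<rho> differentiable (at x)" "f differentiable (at x)" "c differentiable (at x)"
    and pd_f: "\<And>j. pd j f x = \<rho> x * pd j \<psi> x" "pd i f x = c x * pd i \<rho> x"
  shows "(\<Sum>j\<in>UNIV. pd j (\<lambda>y. f y * pd i (pd j \<psi>) y) x)
           - pd i (\<lambda>y. (f y - \<rho> y * c y) * lap \<psi> y) x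
         = \<rho> x * pd i (\<lambda>y. c y * lap \<psi> y + 1/2 * (\<Sum>j\<in>UNIV. (pd j \<psi> y)\<^sup>2)) x"
proof -
  let ?L = "lap \<psi>"
  have smooth: "smooth_on S (pd j \<psi>)" "smooth_on S (pd k (pd j \<psi>))" "smooth_on S ?L" for j k
    using \<psi> S by (auto intro: smooth_on_pd smooth_on_lap)
  then have d\<psi>: "pd j \<psi> differentiable (at x)" "pd k (pd j \<psi>) differentiable (at x)"
    "?L differentiable (at x)" for j k
    using S by (auto intro: smooth_on_imp_differentiable)
  have "(\<Sum>j\<in>UNIV. pd j (pd i (pd j \<psi>)) x) = (\<Sum>j\<in>UNIV. pd i (pd j (pd j \<psi>)) x)"
    using S smooth by (intro sum.cong refl smooth_on_pd_pd_commute)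
  also have "\<dots> = pd i ?L x"
    unfolding lap_def using d\<psi> by (simp add: pd_sum)
  finally have third: "(\<Sum>j\<in>UNIV. pd j (pd i (pd j \<psi>)) x) = pd i ?L x" .
  have first: "pd j (\<lambda>y. f y * pd i (pd j \<psi>) y) x
      = \<rho> x * (pd j \<psi> x * pd i (pd j \<psi>) x) + f x * pd j (pd i (pd j \<psi>)) x" for j
    using diff d\<psi> by (simp add: pd_mult pd_f)
  have second: "pd i (\<lambda>y. (f y - \<rho> y * c y) * ?L y) x
      = (c x * pd i \<rho> x - (pd i \<rho> x * c x + \<rho> x * pd i c x)) * ?L x + (f x - \<rho> x * c x) * pd i ?L x"
    using diff d\<psi> by (simp add: pd_mult pd_diff pd_f(2))
  have square: "pd i (\<lambda>y. (pd j \<psi> y)\<^sup>2) x = 2 * pd j \<psi> x * pd i (pd j \<psi>) x" for j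
    by (rule pd_chain) (auto intro!: derivative_eq_intros d\<psi>)
  have "pd i (\<lambda>y. 1/2 * (\<Sum>j\<in>UNIV. (pd j \<psi> y)\<^sup>2)) x
      = 1/2 * (\<Sum>j\<in>UNIV. 2 * pd j \<psi> x * pd i (pd j \<psi>) x)"
    using d\<psi> by (subst pd_cmult) (simp_all add: pd_sum square)
  then have "pd i (\<lambda>y. c y * ?L y + 1/2 * (\<Sum>j\<in>UNIV. (pd j \<psi> y)\<^sup>2)) x
      = pd i c x * ?L x + c x * pd i ?L x + 1/2 * (\<Sum>j\<in>UNIV. 2 * pd j \<psi> x * pd i (pd j \<psi>) x)"
    using diff d\<psi> by (subst pd_add) (simp_all add: pd_mult)
  with first second third show ?thesis
    by (simp add: sum.distrib sum_distrib_left[symmetric] algebra_simps)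
qed

locale bohm_coefficients =
  fixes K \<phi> F :: "real \<Rightarrow> real"
  assumes K_smooth: "smooth_on1 {0<..} K"
    and K_pos: "\<forall>s>0. K s > 0"
    and phi_smooth: "smooth_on1 {0<..} \<phi>"
    and F_smooth: "smooth_on1 {0<..} F"
    and phi_eq: "\<forall>s>0. sqrt s * deriv \<phi> s = sqrt (K s)"
    and F_eq: "\<forall>s>0. deriv F s = sqrt (K s * s)"
begin

lemma deriv_phi: "s > 0 \<Longrightarrow> deriv \<phi> s = sqrt (K s) / sqrt s"
  using phi_eq by (simp add: eq_divide_eq mult.commute)

lemma deriv_F: "s > 0 \<Longrightarrow> deriv F s = sqrt (K s) * sqrt s"
  using F_eq by (simp add: real_sqrt_mult)

lemma deriv_F_eq_mult_deriv_phi: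
  assumes s: "s > 0"
  shows "deriv F s = s * deriv \<phi> s"
proof -
  have "s * deriv \<phi> s = sqrt s * (sqrt s * deriv \<phi> s)"
    using s by (simp add: mult.assoc[symmetric])
  also have "\<dots> = sqrt (K s) * sqrt s"
    using phi_eq s by simp
  finally show ?thesis
    using s by (simp add: deriv_F)
qed

lemma K_eq_deriv_F_mult_deriv_phi: "s > 0 \<Longrightarrow> K s = deriv F s * deriv \<phi> s"
  using phi_eq K_pos by (simp add: deriv_F mult.assoc less_imp_le)

lemma has_real_derivative_sqrt_K:
  assumes "s > 0"
  shows "((\<lambda>t. sqrt (K t)) has_real_derivative deriv K s / (2 * sqrt (K s))) (at s)"
proof -
  have "K s > 0"
    using K_pos assms by simp
  from DERIV_chain2[OF DERIV_real_sqrt[OF this] smooth_on1_has_real_derivative[OF K_smooth]]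
  have "((\<lambda>t. sqrt (K t)) has_real_derivative inverse (sqrt (K s)) / 2 * deriv K s) (at s)"
    using assms by simp
  moreover have "inverse (sqrt (K s)) / 2 * deriv K s = deriv K s / (2 * sqrt (K s))"
    by (simp add: field_simps)
  ultimately show ?thesis
    by metis
qed

lemma deriv2_phi:
  assumes s: "s > 0"
  shows "deriv (deriv \<phi>) s = deriv K s / (2 * sqrt (K s) * sqrt s) - sqrt (K s) / (2 * s * sqrt s)"
proof -
  define D where "D = (deriv K s / (2 * sqrt (K s)) * sqrt s - sqrt (K s) * (inverse (sqrt s) / 2))
    / (sqrt s * sqrt s)"
  have "((\<lambda>t. sqrt (K t) / sqrt t) has_real_derivative D) (at s)"
    unfolding D_def using s by (intro DERIV_divide has_real_derivative_sqrt_K DERIV_real_sqrt) auto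
  then have "(deriv \<phi> has_real_derivative D) (at s)"
    by (rule has_field_derivative_transform_within_open[of _ _ _ "{0<..}"])
      (use s in \<open>auto simp: deriv_phi\<close>)
  moreover have "(deriv \<phi> has_real_derivative deriv (deriv \<phi>) s) (at s)"
    using smooth_on1_has_real_derivative[OF smooth_on1_deriv[OF phi_smooth]] s by simp
  ultimately have "deriv (deriv \<phi>) s = D"
    by (rule DERIV_unique[symmetric])
  \<comment> \<open>naming \<open>sqrt (K s)\<close> keeps \<open>field_simps\<close> from blowing up on the square-root rules\<close>
  moreover obtain k where "sqrt (K s) = k" "k > 0"
    using s K_pos by simp
  ultimately show ?thesis
    using s by (simp add: D_def field_simps)
qed

lemma half_deriv_K_eq:
  assumes s: "s > 0"
  shows "deriv K s / 2 = deriv F s * deriv (deriv \<phi>) s + (deriv \<phi> s)\<^sup>2 / 2"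
proof -
  obtain k where k: "sqrt (K s) = k" "k > 0"
    using s K_pos by simp
  show ?thesis
    unfolding deriv_F[OF s] deriv_phi[OF s] deriv2_phi[OF s] k(1)
    using s k(2) by (simp add: field_simps power2_eq_square)
qed

lemma sqrt_K_lap_eq:
  fixes \<rho> :: "real^'n::finite \<Rightarrow> real"
  assumes Phi: "\<forall>s>0. (\<Phi> has_real_derivative sqrt (K s)) (at s)"
    and S: "open S" "y \<in> S" and \<rho>: "smooth_on S \<rho>" "\<forall>z\<in>S. \<rho> z > 0"
  shows "sqrt (K (\<rho> y)) * lap (\<lambda>z. \<Phi> (\<rho> z)) y
    = deriv F (\<rho> y) * lap (\<lambda>z. \<phi> (\<rho> z)) y
      + 1/2 * (\<Sum>j\<in>UNIV. (pd j (\<lambda>z. \<phi> (\<rho> z)) y)\<^sup>2)"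
proof -
  define s where "s = \<rho> y"
  define N where "N = (\<Sum>j\<in>UNIV. (pd j \<rho> y)\<^sup>2)"
  have s: "s > 0" and Ks: "K s > 0" and \<rho>_pos: "\<And>z. z \<in> S \<Longrightarrow> \<rho> z \<in> {0<..}"
    using \<rho>(2) S(2) K_pos unfolding s_def by auto
  have d\<phi>: "(\<phi> has_real_derivative deriv \<phi> t) (at t)"
    and d2\<phi>: "(deriv \<phi> has_real_derivative deriv (deriv \<phi>) t) (at t)" if "t \<in> {0<..}" for t
    using that phi_smooth by (auto intro: smooth_on1_has_real_derivative smooth_on1_deriv)
  have lap_\<Phi>: "lap (\<lambda>z. \<Phi> (\<rho> z)) y = deriv K s / (2 * sqrt (K s)) * N + sqrt (K s) * lap \<rho> y"
    unfolding s_def N_def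
    by (rule lap_compose[OF S \<rho>(1) \<rho>_pos, of \<Phi>])
      (use Phi s has_real_derivative_sqrt_K in \<open>auto simp: s_def\<close>)
  have lap_\<phi>: "lap (\<lambda>z. \<phi> (\<rho> z)) y = deriv (deriv \<phi>) s * N + deriv \<phi> s * lap \<rho> y"
    unfolding s_def N_def
    by (rule lap_compose[OF S \<rho>(1) \<rho>_pos d\<phi> d2\<phi>]) (use s in \<open>auto simp: s_def\<close>)
  have grad_\<phi>: "(\<Sum>j\<in>UNIV. (pd j (\<lambda>z. \<phi> (\<rho> z)) y)\<^sup>2) = (deriv \<phi> s)\<^sup>2 * N"
  proof -
    have "pd j (\<lambda>z. \<phi> (\<rho> z)) y = deriv \<phi> s * pd j \<rho> y" for j
      unfolding s_def
      by (rule pd_chain[OF d\<phi>]) (use s S \<rho>(1) smooth_on_imp_differentiable in \<open>auto simp: s_def\<close>)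
    then show ?thesis
      unfolding N_def by (simp add: power_mult_distrib sum_distrib_left)
  qed
  have "sqrt (K s) * lap (\<lambda>z. \<Phi> (\<rho> z)) y
      = sqrt (K s) * (deriv K s / (2 * sqrt (K s))) * N + sqrt (K s) * sqrt (K s) * lap \<rho> y"
    unfolding lap_\<Phi> by (simp add: algebra_simps)
  also have "\<dots> = deriv K s / 2 * N + K s * lap \<rho> y"
    using Ks by simp
  also have "\<dots> = deriv F s * lap (\<lambda>z. \<phi> (\<rho> z)) y + 1/2 * ((deriv \<phi> s)\<^sup>2 * N)"
    unfolding lap_\<phi> half_deriv_K_eq[OF s] K_eq_deriv_F_mult_deriv_phi[OF s] by (simp add: algebra_simps)
  finally show ?thesis
    unfolding s_def grad_\<phi> .
qed

lemma pd_F_compose: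
  fixes \<rho> :: "real^'n::finite \<Rightarrow> real"
  assumes \<rho>: "\<rho> differentiable (at x)" "\<rho> x > 0"
  shows "pd j (\<lambda>y. F (\<rho> y)) x = deriv F (\<rho> x) * pd j \<rho> x"
    and "pd j (\<lambda>y. F (\<rho> y)) x = \<rho> x * pd j (\<lambda>y. \<phi> (\<rho> y)) x"
proof -
  show F: "pd j (\<lambda>y. F (\<rho> y)) x = deriv F (\<rho> x) * pd j \<rho> x"
    using pd_chain[OF smooth_on1_has_real_derivative[OF F_smooth] \<rho>(1)] \<rho>(2) by simp
  have "pd j (\<lambda>y. \<phi> (\<rho> y)) x = deriv \<phi> (\<rho> x) * pd j \<rho> x"
    using pd_chain[OF smooth_on1_has_real_derivative[OF phi_smooth] \<rho>(1)] \<rho>(2) by simp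
  then show "pd j (\<lambda>y. F (\<rho> y)) x = \<rho> x * pd j (\<lambda>y. \<phi> (\<rho> y)) x"
    unfolding F deriv_F_eq_mult_deriv_phi[OF \<rho>(2)] by simp
qed

end

theorem mainTheorem1:
  fixes K \<Phi> \<phi> F :: "real \<Rightarrow> real"
    and \<Omega> :: "(real^'n::finite) set"
    and \<rho> :: "real^'n \<Rightarrow> real"
  assumes K_smooth: "smooth_on1 {0<..} K"
    and K_pos: "\<forall>s>0. K s > 0"
    and Phi_anti: "\<forall>s>0. (\<Phi> has_real_derivative sqrt (K s)) (at s)"
    and phi_smooth: "smooth_on1 {0<..} \<phi>"
    and F_smooth: "smooth_on1 {0<..} F"
    and phi_eq: "\<forall>s>0. sqrt s * deriv \<phi> s = sqrt (K s)"
    and F_eq: "\<forall>s>0. deriv F s = sqrt (K s * s)"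
    and \<Omega>_open: "open \<Omega>"
    and rho_smooth: "smooth_on \<Omega> \<rho>"
    and rho_pos: "\<forall>x\<in>\<Omega>. \<rho> x > 0"
  shows "\<forall>x\<in>\<Omega>. \<forall>i.
     \<rho> x * pd i (\<lambda>y. sqrt (K (\<rho> y)) * lap (\<lambda>z. \<Phi> (\<rho> z)) y) x
     = (\<Sum>j\<in>UNIV. pd j (\<lambda>y. F (\<rho> y) * pd i (pd j (\<lambda>z. \<phi> (\<rho> z))) y) x)
       - pd i (\<lambda>y. (F (\<rho> y) - \<rho> y * deriv F (\<rho> y)) * lap (\<lambda>z. \<phi> (\<rho> z)) y) x"
proof (intro ballI allI)
  fix x i assume x: "x \<in> \<Omega>"
  interpret bohm_coefficients K \<phi> F
    using K_smooth K_pos phi_smooth F_smooth phi_eq F_eq by unfold_locales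
  have \<rho>_pos: "\<And>z. z \<in> \<Omega> \<Longrightarrow> \<rho> z \<in> {0<..}" and s: "\<rho> x > 0"
    using rho_pos x by auto
  have d\<rho>: "\<rho> differentiable (at x)"
    using rho_smooth x by (rule smooth_on_imp_differentiable)
  have smooth_comp: "smooth_on \<Omega> (\<lambda>z. h (\<rho> z))" if "smooth_on1 {0<..} h" for h
    using \<Omega>_open that \<rho>_pos rho_smooth by (rule smooth_on_compose)
  let ?\<psi> = "\<lambda>z. \<phi> (\<rho> z)"
  have "\<rho> x * pd i (\<lambda>y. sqrt (K (\<rho> y)) * lap (\<lambda>z. \<Phi> (\<rho> z)) y) x
      = \<rho> x * pd i (\<lambda>y. deriv F (\<rho> y) * lap ?\<psi> y + 1/2 * (\<Sum>j\<in>UNIV. (pd j ?\<psi> y)\<^sup>2)) x"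
    using sqrt_K_lap_eq[OF Phi_anti \<Omega>_open _ rho_smooth rho_pos] by (simp cong: pd_cong[OF \<Omega>_open x])
  also have "\<dots> = (\<Sum>j\<in>UNIV. pd j (\<lambda>y. F (\<rho> y) * pd i (pd j ?\<psi>) y) x)
       - pd i (\<lambda>y. (F (\<rho> y) - \<rho> y * deriv F (\<rho> y)) * lap ?\<psi> y) x"
    using sum_pd_mult_pd_pd_eq[OF \<Omega>_open x smooth_comp[OF phi_smooth] d\<rho>
        smooth_on_imp_differentiable[OF smooth_comp[OF F_smooth] x]
        smooth_on_imp_differentiable[OF smooth_comp[OF smooth_on1_deriv[OF F_smooth]] x]
        pd_F_compose(2)[OF d\<rho> s] pd_F_compose(1)[OF d\<rho> s]]
    by simp
  finally show "\<rho> x * pd i (\<lambda>y. sqrt (K (\<rho> y)) * lap (\<lambda>z. \<Phi> (\<rho> z)) y) x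
     = (\<Sum>j\<in>UNIV. pd j (\<lambda>y. F (\<rho> y) * pd i (pd j (\<lambda>z. \<phi> (\<rho> z))) y) x)
       - pd i (\<lambda>y. (F (\<rho> y) - \<rho> y * deriv F (\<rho> y)) * lap (\<lambda>z. \<phi> (\<rho> z)) y) x" .
qed

end
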